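(* Let $j$ be a positive integer and for $w>1$ and a d.f. $F$ on $\mathbb{R}$ define the d.f. $$H_w(x)=\frac{F(x)}{\{w-(w-1)F(x)^j\}^{1/j}},\quad x\in\mathbb{R}.$$ Let $u,v>1$, let $N\sim$ Harris$(u,j)$ and $M\sim$ Harris$(v,j)$, let $X_1,X_2,\dots$ be i.i.d. with d.f. $F$, with $N,M,(X_i)$ mutually independent, and let $V=\max(X_1,\dots,X_N)$, so $P\{V\le x\}=H_u(x)$. If $V_1,V_2,\dots$ are i.i.d. copies of $V$, independent of $M$, then $P\{\max(V_1,\dots,V_M)\le x\}=H_{uv}(x)$ for all $x$. Hence the family $\{H_w:w>1\}$ is closed under taking maxima of Harris$(v,j)$-many i.i.d. copies (it is $M$-max stable).
   Context: For an integer $k>0$ and $a>1$, the Harris$(a,k)$ law is the distribution on the positive integers with PGF $\dfrac{s}{\{a-(a-1)s^k\}^{1/k}}$. *)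

theory Defs
  imports "HOL-Probability.Probability"
begin

definition harris_pgf :: "real \<Rightarrow> nat \<Rightarrow> real \<Rightarrow> real" where
  "harris_pgf a k s = s / (a - (a - 1) * s ^ k) powr (1 / real k)"

definition is_Harris :: "'a measure \<Rightarrow> ('a \<Rightarrow> nat) \<Rightarrow> real \<Rightarrow> nat \<Rightarrow> bool" where
  "is_Harris P N a k \<longleftrightarrow>
     N \<in> measurable P (count_space UNIV) \<and>
     (\<forall>s\<in>{0..1}. (\<integral>\<omega>. s ^ N \<omega> \<partial>P) = harris_pgf a k s)"

definition H_df :: "nat \<Rightarrow> (real \<Rightarrow> real) \<Rightarrow> real \<Rightarrow> real \<Rightarrow> real" where
  "H_df j F w x = F x / (w - (w - 1) * F x ^ j) powr (1 / real j)"

end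

theory Submission
  imports Defs
begin

text \<open>Conditioning on the random index N, the maximum of N i.i.d. copies of a variable with
  d.f. G is at most x with probability E[G(x)^N], the PGF of N at G(x). The Harris PGF h_a
  satisfies h_a(s)^(-k) - 1 = a (s^(-k) - 1), hence h_b \<circ> h_a = h_(ab): this gives both
  H_u = h_u \<circ> F and H_(uv) = h_v \<circ> H_u.\<close>

lemma harris_pgf_zero: "harris_pgf a k 0 = 0"
  by (simp add: harris_pgf_def)

lemma H_df_eq_harris_pgf: "H_df j F w x = harris_pgf w j (F x)"
  by (simp add: H_df_def harris_pgf_def)

lemma harris_pgf_harris_pgf:
  fixes a b s :: real
  assumes k: "k > 0" and a: "a \<ge> 1" and b: "b \<ge> 1" and s: "0 \<le> s" "s \<le> 1"
  shows "harris_pgf b k (harris_pgf a k s) = harris_pgf (a * b) k s"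
proof -
  define D where "D = a - (a - 1) * s ^ k"
  define E where "E = a * b - (a * b - 1) * s ^ k"
  have sk: "0 \<le> s ^ k" "s ^ k \<le> 1"
    using s by (auto simp: power_le_one)
  have D: "D \<ge> 1"
    using sk a mult_left_le[of "s ^ k" "a - 1"] by (simp add: D_def)
  have E: "E \<ge> 1"
    using sk a b mult_left_le[of "s ^ k" "a * b - 1"] mult_mono[of 1 a 1 b] by (simp add: E_def)
  have "harris_pgf a k s ^ k = s ^ k / D"
    using D k by (simp add: harris_pgf_def D_def power_divide powr_power)
  then have "b - (b - 1) * harris_pgf a k s ^ k = E / D"
    using D by (simp add: E_def D_def field_simps)
  then show ?thesis
    using D E by (simp add: harris_pgf_def E_def D_def powr_divide)
qed

context prob_space
begin

lemma indep_vars_random_variable: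
  "indep_vars M' X I \<Longrightarrow> i \<in> I \<Longrightarrow> random_variable (M' i) (X i)"
  unfolding indep_vars_def2 by blast

lemma sums_prob_times_power_expectation:
  fixes N :: "'a \<Rightarrow> nat" and g :: real
  assumes N[measurable]: "N \<in> measurable M (count_space UNIV)" and g: "\<bar>g\<bar> \<le> 1"
  shows "(\<lambda>n. prob {\<omega>\<in>space M. N \<omega> = n} * g ^ n) sums (\<integral>\<omega>. g ^ N \<omega> \<partial>M)"
proof -
  define B where "B n = {\<omega>\<in>space M. N \<omega> = n}" for n
  have B[measurable]: "B n \<in> events" for n
    unfolding B_def by measurable
  define f where "f n \<omega> = g ^ n * indicator (B n) \<omega>" for n \<omega>
  have f_sums: "(\<lambda>n. f n \<omega>) sums g ^ N \<omega>" if "\<omega> \<in> space M" for \<omega>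
  proof -
    have "(\<lambda>n. f n \<omega>) = (\<lambda>n. if n = N \<omega> then g ^ n else 0)"
      using that by (auto simp: f_def B_def)
    then show ?thesis
      using sums_single[of "N \<omega>" "\<lambda>n. g ^ n"] by simp
  qed
  have "(\<lambda>n. integral\<^sup>L M (f n)) sums (\<integral>\<omega>. (\<Sum>n. f n \<omega>) \<partial>M)"
  proof (rule sums_integral)
    show "integrable M (f n)" for n
      unfolding f_def
      by (intro integrable_mult_right integrable_real_indicator) (simp_all add: less_top[symmetric])
    show "AE \<omega> in M. summable (\<lambda>n. norm (f n \<omega>))"
    proof (rule AE_I2)
      fix \<omega>
      show "summable (\<lambda>n. norm (f n \<omega>))"
        by (rule summable_finite[of "{N \<omega>}"]) (auto simp: f_def B_def)
    qed
    have "disjoint_family B"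
      by (auto simp: disjoint_family_on_def B_def)
    then have "summable (\<lambda>n. prob (B n))"
      by (intro sums_summable[OF finite_measure_UNION]) auto
    then show "summable (\<lambda>n. \<integral>\<omega>. norm (f n \<omega>) \<partial>M)"
    proof (rule summable_comparison_test'[where N=0])
      fix n
      have "(\<integral>\<omega>. norm (f n \<omega>) \<partial>M) = \<bar>g\<bar> ^ n * prob (B n)"
        by (simp add: f_def abs_mult power_abs)
      then show "norm (\<integral>\<omega>. norm (f n \<omega>) \<partial>M) \<le> prob (B n)"
        using g by (simp add: mult_left_le_one_le power_le_one)
    qed
  qed
  moreover have "(\<integral>\<omega>. (\<Sum>n. f n \<omega>) \<partial>M) = (\<integral>\<omega>. g ^ N \<omega> \<partial>M)"
    using f_sums by (intro Bochner_Integration.integral_cong) (auto simp: sums_iff)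
  moreover have "integral\<^sup>L M (f n) = prob (B n) * g ^ n" for n
    unfolding f_def using B by simp
  ultimately show ?thesis
    by (simp add: B_def)
qed

lemma prob_eq_and_all_le_eq_prod:
  fixes N :: "'a \<Rightarrow> nat" and Y :: "nat \<Rightarrow> 'a \<Rightarrow> real"
  assumes indep: "indep_vars (\<lambda>_. borel) Z I"
    and a: "a \<in> I" and b: "b ` {1..n} \<subseteq> I" "inj_on b {1..n}" "a \<notin> b ` {1..n}"
    and ZN: "Z a = (\<lambda>\<omega>. real (N \<omega>))" and ZY: "\<And>k. k \<in> {1..n} \<Longrightarrow> Z (b k) = Y k"
  shows "prob {\<omega>\<in>space M. N \<omega> = n \<and> (\<forall>k\<in>{1..n}. Y k \<omega> \<le> x)}
       = prob {\<omega>\<in>space M. N \<omega> = n} * (\<Prod>k=1..n. prob {\<omega>\<in>space M. Y k \<omega> \<le> x})"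
proof -
  define J where "J = insert a (b ` {1..n})"
  define C where "C i = (if i = a then {real n} else {..x})" for i
  have event_a: "Z a -` C a \<inter> space M = {\<omega>\<in>space M. N \<omega> = n}"
    by (auto simp: C_def ZN)
  have event_b: "Z (b k) -` C (b k) \<inter> space M = {\<omega>\<in>space M. Y k \<omega> \<le> x}" if "k \<in> {1..n}" for k
    using that b(3) by (auto simp: C_def ZY)
  have "{\<omega>\<in>space M. N \<omega> = n \<and> (\<forall>k\<in>{1..n}. Y k \<omega> \<le> x)}
      = {\<omega>\<in>space M. N \<omega> = n} \<inter> (\<Inter>k\<in>{1..n}. {\<omega>\<in>space M. Y k \<omega> \<le> x})"
    by auto
  also have "\<dots> = (\<Inter>i\<in>J. Z i -` C i \<inter> space M)"
    unfolding J_def INF_insert image_image event_a using event_b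
    by (intro arg_cong2[where f="(\<inter>)"] INF_cong) auto
  also have "prob \<dots> = (\<Prod>i\<in>J. prob (Z i -` C i \<inter> space M))"
    using a b by (intro indep_varsD[OF indep]) (auto simp: J_def C_def)
  also have "\<dots> = prob (Z a -` C a \<inter> space M) * (\<Prod>k=1..n. prob (Z (b k) -` C (b k) \<inter> space M))"
    using b by (simp add: J_def prod.reindex)
  finally show ?thesis
    using event_a event_b by simp
qed

lemma prob_all_le_random_index:
  fixes N :: "'a \<Rightarrow> nat" and Y :: "nat \<Rightarrow> 'a \<Rightarrow> real"
  assumes indep: "indep_vars (\<lambda>_. borel) Z I"
    and a: "a \<in> I" and b: "b ` {1..} \<subseteq> I" "inj_on b {1..}" "a \<notin> b ` {1..}"
    and ZN: "Z a = (\<lambda>\<omega>. real (N \<omega>))" and ZY: "\<And>k. k \<ge> 1 \<Longrightarrow> Z (b k) = Y k"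
    and N[measurable]: "N \<in> measurable M (count_space UNIV)"
    and G: "\<And>k. k \<ge> 1 \<Longrightarrow> prob {\<omega>\<in>space M. Y k \<omega> \<le> x} = g"
  shows "prob {\<omega>\<in>space M. \<forall>k\<in>{1..N \<omega>}. Y k \<omega> \<le> x} = (\<integral>\<omega>. g ^ N \<omega> \<partial>M)"
proof -
  have [measurable]: "Y k \<in> borel_measurable M" if "k \<ge> 1" for k
    using indep_vars_random_variable[OF indep, of "b k"] b(1) ZY that by auto
  define A where "A n = {\<omega>\<in>space M. N \<omega> = n \<and> (\<forall>k\<in>{1..n}. Y k \<omega> \<le> x)}" for n
  have prob_A: "prob (A n) = prob {\<omega>\<in>space M. N \<omega> = n} * g ^ n" for n
  proof -
    have "prob (A n) = prob {\<omega>\<in>space M. N \<omega> = n} * (\<Prod>k=1..n. prob {\<omega>\<in>space M. Y k \<omega> \<le> x})"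
      unfolding A_def using b ZY
      by (intro prob_eq_and_all_le_eq_prod[where b=b, OF indep a _ _ _ ZN]) (auto intro: inj_on_subset)
    then show ?thesis
      by (simp add: G)
  qed
  have "(\<lambda>n. prob (A n)) sums prob (\<Union>n. A n)"
    by (intro finite_measure_UNION) (auto simp: A_def disjoint_family_on_def)
  moreover have "(\<Union>n. A n) = {\<omega>\<in>space M. \<forall>k\<in>{1..N \<omega>}. Y k \<omega> \<le> x}"
    by (auto simp: A_def)
  moreover have "\<bar>g\<bar> \<le> 1"
    using G[of 1] by auto
  then have "(\<lambda>n. prob (A n)) sums (\<integral>\<omega>. g ^ N \<omega> \<partial>M)"
    unfolding prob_A by (rule sums_prob_times_power_expectation[OF N])
  ultimately show ?thesis
    using sums_unique2 by metis
qed

text \<open>The maximum over the empty index set is unspecified, so the event is determined only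
  up to the null set where N = 0.\<close>

lemma prob_Max_le_eq_prob_all_le:
  fixes N :: "'a \<Rightarrow> nat" and Y :: "nat \<Rightarrow> 'a \<Rightarrow> real"
  assumes [measurable]: "N \<in> measurable M (count_space UNIV)"
    and [measurable]: "\<And>k. k \<ge> 1 \<Longrightarrow> Y k \<in> borel_measurable M"
    and N0: "prob {\<omega>\<in>space M. N \<omega> = 0} = 0"
  shows "prob {\<omega>\<in>space M. Max ((\<lambda>k. Y k \<omega>) ` {1..N \<omega>}) \<le> x}
       = prob {\<omega>\<in>space M. \<forall>k\<in>{1..N \<omega>}. Y k \<omega> \<le> x}"
proof (rule measure_eq_AE)
  have "AE \<omega> in M. N \<omega> \<noteq> 0"
    using N0 prob_eq_0[of "{\<omega>\<in>space M. N \<omega> = 0}"] by (auto elim: AE_mp)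
  then show "AE \<omega> in M. \<omega> \<in> {\<omega>\<in>space M. Max ((\<lambda>k. Y k \<omega>) ` {1..N \<omega>}) \<le> x}
      \<longleftrightarrow> \<omega> \<in> {\<omega>\<in>space M. \<forall>k\<in>{1..N \<omega>}. Y k \<omega> \<le> x}"
    by (auto elim!: AE_mp)
qed measurable

lemma is_Harris_prob_zero:
  assumes "is_Harris M N a k"
  shows "prob {\<omega>\<in>space M. N \<omega> = 0} = 0"
proof -
  have N: "N \<in> measurable M (count_space UNIV)"
    and pgf: "(\<integral>\<omega>. 0 ^ N \<omega> \<partial>M) = harris_pgf a k 0"
    using assms by (auto simp: is_Harris_def)
  have "(\<lambda>n. prob {\<omega>\<in>space M. N \<omega> = n} * 0 ^ n) sums prob {\<omega>\<in>space M. N \<omega> = 0}"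
    by (rule powser_sums_zero)
  with sums_prob_times_power_expectation[OF N, of 0] pgf show ?thesis
    using sums_unique2 by (fastforce simp: harris_pgf_zero)
qed

lemma prob_Max_random_index_le_Harris:
  fixes N :: "'a \<Rightarrow> nat" and Y :: "nat \<Rightarrow> 'a \<Rightarrow> real"
  assumes Harris: "is_Harris M N c j"
    and indep: "indep_vars (\<lambda>_. borel) Z I"
    and a: "a \<in> I" and b: "b ` {1..} \<subseteq> I" "inj_on b {1..}" "a \<notin> b ` {1..}"
    and ZN: "Z a = (\<lambda>\<omega>. real (N \<omega>))" and ZY: "\<And>k. k \<ge> 1 \<Longrightarrow> Z (b k) = Y k"
    and G: "\<And>k. k \<ge> 1 \<Longrightarrow> prob {\<omega>\<in>space M. Y k \<omega> \<le> x} = g"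
  shows "prob {\<omega>\<in>space M. Max ((\<lambda>k. Y k \<omega>) ` {1..N \<omega>}) \<le> x} = harris_pgf c j g"
proof -
  have N: "N \<in> measurable M (count_space UNIV)"
    and pgf: "\<And>s. s \<in> {0..1} \<Longrightarrow> (\<integral>\<omega>. s ^ N \<omega> \<partial>M) = harris_pgf c j s"
    using Harris by (auto simp: is_Harris_def)
  have Y: "Y k \<in> borel_measurable M" if "k \<ge> 1" for k
    using indep_vars_random_variable[OF indep, of "b k"] b(1) ZY that by auto
  have "g \<in> {0..1}"
    using G[of 1] by auto
  have "prob {\<omega>\<in>space M. Max ((\<lambda>k. Y k \<omega>) ` {1..N \<omega>}) \<le> x}
      = prob {\<omega>\<in>space M. \<forall>k\<in>{1..N \<omega>}. Y k \<omega> \<le> x}"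
    using N Y is_Harris_prob_zero[OF Harris] by (rule prob_Max_le_eq_prob_all_le)
  also have "\<dots> = (\<integral>\<omega>. g ^ N \<omega> \<partial>M)"
    using indep a b ZN ZY N G by (rule prob_all_le_random_index)
  also have "\<dots> = harris_pgf c j g"
    using pgf \<open>g \<in> {0..1}\<close> by blast
  finally show ?thesis .
qed

lemma prob_le_eq_if_distr_eq:
  fixes X Y :: "'a \<Rightarrow> real"
  assumes "distr M borel X = distr M borel Y"
    and "X \<in> borel_measurable M" "Y \<in> borel_measurable M"
  shows "prob {\<omega>\<in>space M. X \<omega> \<le> x} = prob {\<omega>\<in>space M. Y \<omega> \<le> x}"
proof -
  have "prob {\<omega>\<in>space M. Z \<omega> \<le> x} = measure (distr M borel Z) {..x}"
    if "Z \<in> borel_measurable M" for Z :: "'a \<Rightarrow> real"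
    using that by (subst measure_distr) (auto simp: vimage_def Int_def conj_commute)
  then show ?thesis
    using assms by metis
qed

end

theorem proposition2p2:
  fixes P :: "'a measure"
    and j :: nat and u v :: real
    and F :: "real \<Rightarrow> real"
    and N Mv :: "'a \<Rightarrow> nat"
    and X V :: "nat \<Rightarrow> 'a \<Rightarrow> real"
  assumes "prob_space P"
    and "j > 0" and "u > 1" and "v > 1"
    and "is_Harris P N u j" and "is_Harris P Mv v j"
    and "\<And>i x. i \<ge> 1 \<Longrightarrow> measure P {\<omega> \<in> space P. X i \<omega> \<le> x} = F x"
    and "prob_space.indep_vars P (\<lambda>_. borel)
           (\<lambda>i \<omega>. case i of Inl k \<Rightarrow> X k \<omega> | Inr b \<Rightarrow> (if b then real (N \<omega>) else real (Mv \<omega>)))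
           (Inl ` {1..} \<union> range Inr)"
    and "prob_space.indep_vars P (\<lambda>_. borel)
           (\<lambda>i \<omega>. case i of None \<Rightarrow> real (Mv \<omega>) | Some k \<Rightarrow> V k \<omega>)
           (insert None (Some ` {1..}))"
    and "\<And>i. i \<ge> 1 \<Longrightarrow>
           distr P borel (V i) = distr P borel (\<lambda>\<omega>. Max ((\<lambda>i. X i \<omega>) ` {1..N \<omega>}))"
  shows "(\<forall>x. measure P {\<omega> \<in> space P. Max ((\<lambda>i. X i \<omega>) ` {1..N \<omega>}) \<le> x} = H_df j F u x)
       \<and> (\<forall>x. measure P {\<omega> \<in> space P. Max ((\<lambda>i. V i \<omega>) ` {1..Mv \<omega>}) \<le> x} = H_df j F (u * v) x)"
proof -
  interpret prob_space P by fact
  have cdf_X: "prob {\<omega>\<in>space P. Max ((\<lambda>i. X i \<omega>) ` {1..N \<omega>}) \<le> x} = H_df j F u x" for x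
    unfolding H_df_eq_harris_pgf
    by (rule prob_Max_random_index_le_Harris[OF assms(5,8), where a="Inr True" and b=Inl])
       (use assms(7) in \<open>auto simp: inj_on_def\<close>)
  have cdf_V: "prob {\<omega>\<in>space P. V k \<omega> \<le> x} = H_df j F u x" if "k \<ge> 1" for k x
  proof -
    have "N \<in> measurable P (count_space UNIV)"
      using assms(5) by (simp add: is_Harris_def)
    moreover have "X i \<in> borel_measurable P" if "i \<ge> 1" for i
      using indep_vars_random_variable[OF assms(8), of "Inl i"] that by simp
    moreover have "V k \<in> borel_measurable P"
      using indep_vars_random_variable[OF assms(9), of "Some k"] that by simp
    ultimately show ?thesis
      using prob_le_eq_if_distr_eq[OF assms(10)[OF that]] cdf_X by simp
  qed
  have F: "0 \<le> F x" "F x \<le> 1" for x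
    using assms(7)[of 1 x, symmetric] by auto
  have "prob {\<omega>\<in>space P. Max ((\<lambda>i. V i \<omega>) ` {1..Mv \<omega>}) \<le> x} = H_df j F (u * v) x" for x
  proof -
    have "prob {\<omega>\<in>space P. Max ((\<lambda>i. V i \<omega>) ` {1..Mv \<omega>}) \<le> x} = harris_pgf v j (H_df j F u x)"
      by (rule prob_Max_random_index_le_Harris[OF assms(6,9), where a=None and b=Some])
         (use cdf_V in \<open>auto simp: inj_on_def\<close>)
    also have "\<dots> = H_df j F (u * v) x"
      using assms(2-4) F[of x] by (simp add: H_df_eq_harris_pgf harris_pgf_harris_pgf)
    finally show ?thesis .
  qed
  with cdf_X show ?thesis
    by blast
qed

end
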